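(* The $\mathbb{F}$-dual of every $A$-code (of every length) is an $A$-code if and only if either $m=1$, or $m=2$ and $f(x)=x^2+ax-1$ for some $a\in\mathbb{F}$, or $m\ge2$ and $f(x)=x^m\pm1$.
   Context: Let $\mathbb{F}$ be a finite field, $f(x)\in\mathbb{F}[x]$ monic of degree $m$, $A=\mathbb{F}[x]/\langle f(x)\rangle$, elements identified with polynomials of degree $<m$. An $A$-code of length $l$ is an $A$-submodule of $A^l$. Identify $g(x)=\sum_{i=0}^{m-1}a_ix^i\in A$ with the vector $(a_0,\ldots,a_{m-1})\in\mathbb{F}^m$, and $(g_1,\ldots,g_l)\in A^l$ with the concatenation of the vectors of $g_1,\ldots,g_l$ in $\mathbb{F}^{lm}$. Under this identification an $A$-code $C$ is an $\mathbb{F}$-linear code of length $lm$, and its $\mathbb{F}$-dual $C^{\perp_{\mathbb{F}}}$ is its dual with respect to the standard dot product on $\mathbb{F}^{lm}$, viewed again as a subset of $A^l$; it is an $A$-code if it is an $A$-submodule of $A^l$. *)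

theory Defs
  imports "HOL-Computational_Algebra.Polynomial"
begin

text \<open>A = F[x]/<f>, elements identified with polynomials of degree < m = degree f
  (together with 0).\<close>

definition A_elems :: "'a::field poly \<Rightarrow> 'a poly set" where
  "A_elems f = {p. p = 0 \<or> degree p < degree f}"

definition A_vecs :: "'a::field poly \<Rightarrow> nat \<Rightarrow> (nat \<Rightarrow> 'a poly) set" where
  "A_vecs f l = {v. (\<forall>i<l. v i \<in> A_elems f) \<and> (\<forall>i\<ge>l. v i = 0)}"

definition A_smult :: "'a::field poly \<Rightarrow> 'a poly \<Rightarrow> (nat \<Rightarrow> 'a poly) \<Rightarrow> (nat \<Rightarrow> 'a poly)" where
  "A_smult f a v = (\<lambda>i. (a * v i) mod f)"

definition A_code :: "'a::field poly \<Rightarrow> nat \<Rightarrow> (nat \<Rightarrow> 'a poly) set \<Rightarrow> bool" where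
  "A_code f l C \<longleftrightarrow> C \<subseteq> A_vecs f l \<and> (\<lambda>i. 0) \<in> C \<and>
     (\<forall>u\<in>C. \<forall>v\<in>C. (\<lambda>i. u i + v i) \<in> C) \<and>
     (\<forall>a\<in>A_elems f. \<forall>v\<in>C. A_smult f a v \<in> C)"

text \<open>Standard dot product on F^{lm} under the coefficient identification.\<close>
definition F_dot :: "'a::field poly \<Rightarrow> nat \<Rightarrow> (nat \<Rightarrow> 'a poly) \<Rightarrow> (nat \<Rightarrow> 'a poly) \<Rightarrow> 'a" where
  "F_dot f l u v = (\<Sum>i<l. \<Sum>j<degree f. coeff (u i) j * coeff (v i) j)"

definition F_dual :: "'a::field poly \<Rightarrow> nat \<Rightarrow> (nat \<Rightarrow> 'a poly) set \<Rightarrow> (nat \<Rightarrow> 'a poly) set" where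
  "F_dual f l C = {v \<in> A_vecs f l. \<forall>c\<in>C. F_dot f l v c = 0}"

end

theory Submission imports Defs begin

text \<open>The dual of a code is closed under the A-action as soon as every multiplication operator
  p \<mapsto> a p mod f has an adjoint, for the coordinate dot product, that is again a multiplication
  operator; since every multiplication is a polynomial in multiplication by x, it suffices that
  multiplication by x has such an adjoint. This holds when x is self-adjoint (m = 1, or m = 2 with
  f(0) = -1) and when f = x^m \<mp> 1, where multiplication by x is a signed cyclic shift, hence an
  isometry with inverse \<plusminus>x^(m-1).

  Conversely, the dual of the A-code {(c, x c)} of length 2 consists of the pairs (-x^T w, w),
  where x^T is the transpose of multiplication by x; its closure under multiplication by x says
  that x x^T = x^T x, i.e. the companion matrix of f is normal. Comparing a few entries of
  x x^T and x^T x forces f(0)^2 = 1, f_i = 0 for 0 < i < m - 1 and f(0) f_(m-1) = -f_1,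
  which leaves exactly the listed polynomials.\<close>

definition coeff_dot :: "nat \<Rightarrow> 'a::comm_ring_1 poly \<Rightarrow> 'a poly \<Rightarrow> 'a" where
  "coeff_dot m p q = (\<Sum>j<m. coeff p j * coeff q j)"

lemma F_dot_eq_sum_coeff_dot: "F_dot f l u v = (\<Sum>i<l. coeff_dot (degree f) (u i) (v i))"
  by (simp add: F_dot_def coeff_dot_def)

lemma coeff_dot_add_left: "coeff_dot m (p + q) r = coeff_dot m p r + coeff_dot m q r"
  by (simp add: coeff_dot_def distrib_right sum.distrib)

lemma coeff_dot_add_right: "coeff_dot m r (p + q) = coeff_dot m r p + coeff_dot m r q"
  by (simp add: coeff_dot_def distrib_left sum.distrib)

lemma coeff_dot_diff_left: "coeff_dot m (p - q) r = coeff_dot m p r - coeff_dot m q r"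
  by (simp add: coeff_dot_def left_diff_distrib sum_subtractf)

lemma coeff_dot_minus_left: "coeff_dot m (- p) r = - coeff_dot m p r"
  by (simp add: coeff_dot_def sum_negf)

lemma coeff_dot_smult_left: "coeff_dot m (smult c p) r = c * coeff_dot m p r"
  by (simp add: coeff_dot_def sum_distrib_left mult.assoc)

lemma coeff_dot_smult_right: "coeff_dot m r (smult c p) = c * coeff_dot m r p"
  by (simp add: coeff_dot_def sum_distrib_left algebra_simps)

lemma coeff_dot_0_left [simp]: "coeff_dot m 0 r = 0"
  by (simp add: coeff_dot_def)

lemma coeff_dot_0_right [simp]: "coeff_dot m r 0 = 0"
  by (simp add: coeff_dot_def)

lemma coeff_dot_commute: "coeff_dot m p q = coeff_dot m q p"
  by (simp add: coeff_dot_def mult.commute)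

lemma coeff_dot_monom_left: "i < m \<Longrightarrow> coeff_dot m (monom 1 i) q = coeff q i"
  unfolding coeff_dot_def coeff_monom by (simp add: if_distrib[of "\<lambda>c. c * _"] cong: if_cong)

lemma coeff_dot_monom_right: "i < m \<Longrightarrow> coeff_dot m q (monom 1 i) = coeff q i"
  using coeff_dot_monom_left coeff_dot_commute by metis

lemma A_elems_iff_coeff:
  assumes "degree f = m" "m \<ge> 1"
  shows "p \<in> A_elems f \<longleftrightarrow> (\<forall>k\<ge>m. coeff p k = 0)"
proof
  assume "p \<in> A_elems f"
  then show "\<forall>k\<ge>m. coeff p k = 0" using assms by (auto simp: A_elems_def coeff_eq_0)
next
  assume "\<forall>k\<ge>m. coeff p k = 0"
  then have "degree p \<le> m - 1" using assms by (intro degree_le) auto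
  with assms show "p \<in> A_elems f" by (auto simp: A_elems_def)
qed

lemma mod_in_A_elems: "f \<noteq> 0 \<Longrightarrow> p mod f \<in> A_elems f"
  using degree_mod_less[of f p] by (auto simp: A_elems_def)

lemma mod_A_elems: "p \<in> A_elems f \<Longrightarrow> p mod f = p"
  by (auto simp: A_elems_def mod_poly_less)

lemma A_elems_add: "p \<in> A_elems f \<Longrightarrow> q \<in> A_elems f \<Longrightarrow> p + q \<in> A_elems f"
  using degree_add_le_max[of p q] by (auto simp: A_elems_def)

lemma A_elems_smult: "p \<in> A_elems f \<Longrightarrow> smult c p \<in> A_elems f"
  by (auto simp: A_elems_def)

lemma monom_in_A_elems: "k < degree f \<Longrightarrow> monom 1 k \<in> A_elems f"
  by (auto simp: A_elems_def degree_monom_eq)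

lemma pCons_0_mod_mod: "pCons 0 (p mod f) mod f = pCons 0 p mod (f :: 'a::field poly)"
proof -
  have "pCons 0 q = [:0, 1:] * q" for q :: "'a poly" by simp
  then show ?thesis by (metis mod_mult_right_eq)
qed

lemma pCons_0_monom_mod: "Suc k < degree f \<Longrightarrow> pCons 0 (monom 1 k) mod f = monom 1 (Suc k)"
  by (metis degree_monom_eq monom_Suc mod_poly_less one_neq_zero)

lemma pCons_0_mod_monic:
  assumes "lead_coeff f = 1" "degree f = m" "m \<ge> 1" "p \<in> A_elems f"
  shows "pCons 0 p mod f = pCons 0 p - smult (coeff p (m - 1)) f"
proof -
  let ?r = "pCons 0 p - smult (coeff p (m - 1)) f"
  have p_high: "\<forall>k\<ge>m. coeff p k = 0" using A_elems_iff_coeff assms by blast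
  have "coeff ?r k = 0" if "m \<le> k" for k
  proof (cases "k = m")
    case True
    then show ?thesis using assms by (cases k) auto
  next
    case False
    then have "coeff f k = 0" "coeff (pCons 0 p) k = 0"
      using that assms p_high by (auto intro: coeff_eq_0 simp: coeff_pCons split: nat.split)
    then show ?thesis by simp
  qed
  then have "?r \<in> A_elems f" using A_elems_iff_coeff assms by blast
  have "pCons 0 p mod f = (?r + [:coeff p (m - 1):] * f) mod f" by simp
  also have "\<dots> = ?r mod f" by (rule mod_mult_self1)
  also have "\<dots> = ?r" using \<open>?r \<in> A_elems f\<close> by (rule mod_A_elems)
  finally show ?thesis .
qed

lemma coeff_pCons_0_mod_monic:
  assumes "lead_coeff f = 1" "degree f = m" "m \<ge> 1" "p \<in> A_elems f"
  shows "coeff (pCons 0 p mod f) j =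
    (if j = 0 then 0 else coeff p (j - 1)) - coeff p (m - 1) * coeff f j"
  using pCons_0_mod_monic[OF assms] by (cases j) auto

definition mult_adjoint :: "'a::field poly \<Rightarrow> 'a poly \<Rightarrow> 'a poly \<Rightarrow> bool" where
  "mult_adjoint f a t \<longleftrightarrow> (\<forall>p\<in>A_elems f. \<forall>q\<in>A_elems f.
     coeff_dot (degree f) (a * p mod f) q = coeff_dot (degree f) p (t * q mod f))"

lemma mult_adjoint_pcompose:
  assumes "f \<noteq> 0" and x_adj: "mult_adjoint f [:0, 1:] s"
  shows "mult_adjoint f a (pcompose a s)"
  unfolding mult_adjoint_def
proof (intro ballI)
  fix p q assume p: "p \<in> A_elems f" and q: "q \<in> A_elems f"
  let ?dot = "coeff_dot (degree f)"
  show "?dot (a * p mod f) q = ?dot p (pcompose a s * q mod f)"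
    using q
  proof (induction a arbitrary: q)
    case 0
    then show ?case by (simp add: pcompose_0)
  next
    case (pCons c a)
    have smult_mod: "smult c p mod f = smult c p" "smult c q mod f = smult c q"
      using p pCons.prems by (simp_all add: A_elems_smult mod_A_elems)
    let ?ap = "a * p mod f" and ?sq = "s * q mod f"
    have "?ap \<in> A_elems f" "?sq \<in> A_elems f" using mod_in_A_elems assms(1) by auto
    have "pCons c a * p mod f = smult c p + pCons 0 ?ap mod f"
      using smult_mod by (simp add: poly_mod_add_left pCons_0_mod_mod)
    then have "?dot (pCons c a * p mod f) q = c * ?dot p q + ?dot (pCons 0 ?ap mod f) q"
      by (simp add: coeff_dot_add_left coeff_dot_smult_left)
    also have "?dot (pCons 0 ?ap mod f) q = ?dot ?ap ?sq"
      using x_adj \<open>?ap \<in> A_elems f\<close> pCons.prems by (simp add: mult_adjoint_def)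
    also have "\<dots> = ?dot p (pcompose a s * ?sq mod f)"
      using pCons.IH \<open>?sq \<in> A_elems f\<close> .
    also have "pcompose a s * ?sq mod f = s * pcompose a s * q mod f"
      by (simp add: mod_mult_right_eq mult_ac)
    finally have "?dot (pCons c a * p mod f) q = ?dot p (smult c q + s * pcompose a s * q mod f)"
      by (simp add: coeff_dot_add_right coeff_dot_smult_right)
    moreover have "pcompose (pCons c a) s * q mod f = smult c q + s * pcompose a s * q mod f"
      using smult_mod by (simp add: pcompose_pCons distrib_right poly_mod_add_left)
    ultimately show ?case by simp
  qed
qed

lemma A_code_F_dual_if_mult_adjoint:
  assumes "f \<noteq> 0" and adj: "\<And>a. \<exists>t. mult_adjoint f a t" and C: "A_code f l C"
  shows "A_code f l (F_dual f l C)"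
proof -
  have zero: "(\<lambda>i. 0) \<in> F_dual f l C"
    by (simp add: F_dual_def A_vecs_def A_elems_def F_dot_eq_sum_coeff_dot)
  have add: "(\<lambda>i. u i + v i) \<in> F_dual f l C" if "u \<in> F_dual f l C" "v \<in> F_dual f l C" for u v
    using that by (auto simp: F_dual_def A_vecs_def A_elems_add F_dot_eq_sum_coeff_dot
        coeff_dot_add_left sum.distrib)
  have smult: "A_smult f a v \<in> F_dual f l C" if v: "v \<in> F_dual f l C" for a v
  proof -
    obtain t where t: "mult_adjoint f a t" using adj by blast
    have v_vec: "v \<in> A_vecs f l" and v_orth: "\<forall>c\<in>C. F_dot f l v c = 0"
      using v by (auto simp: F_dual_def)
    have "F_dot f l (A_smult f a v) c = 0" if c: "c \<in> C" for c
    proof -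
      have "c \<in> A_vecs f l" using C c by (auto simp: A_code_def)
      have "F_dot f l (A_smult f a v) c = (\<Sum>i<l. coeff_dot (degree f) (v i) (t * c i mod f))"
        unfolding F_dot_eq_sum_coeff_dot A_smult_def
        by (intro sum.cong refl) (use t v_vec \<open>c \<in> A_vecs f l\<close> in
            \<open>auto simp: A_vecs_def mult_adjoint_def\<close>)
      also have "\<dots> = F_dot f l v (A_smult f (t mod f) c)"
        by (simp add: F_dot_eq_sum_coeff_dot A_smult_def mod_mult_left_eq)
      also have "\<dots> = 0"
        using v_orth C c mod_in_A_elems[OF assms(1)] by (auto simp: A_code_def)
      finally show ?thesis .
    qed
    moreover have "A_smult f a v \<in> A_vecs f l"
      using v_vec mod_in_A_elems[OF assms(1)] by (auto simp: A_vecs_def A_smult_def)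
    ultimately show ?thesis by (simp add: F_dual_def)
  qed
  show ?thesis unfolding A_code_def using zero add smult by (auto simp: F_dual_def)
qed

lemma mult_adjoint_x_self:
  assumes "lead_coeff f = 1" "degree f = 1 \<or> (degree f = 2 \<and> coeff f 0 = -1)"
  shows "mult_adjoint f [:0, 1:] [:0, 1:]"
  unfolding mult_adjoint_def
proof (intro ballI)
  fix p q assume "p \<in> A_elems f" "q \<in> A_elems f"
  let ?m = "degree f"
  have "?m \<ge> 1" using assms(2) by auto
  note x_mod = coeff_pCons_0_mod_monic[OF assms(1) refl this]
  show "coeff_dot ?m ([:0, 1:] * p mod f) q = coeff_dot ?m p ([:0, 1:] * q mod f)"
    using assms(2) by (auto simp: coeff_dot_def x_mod \<open>p \<in> A_elems f\<close> \<open>q \<in> A_elems f\<close>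
        numeral_2_eq_2 algebra_simps)
qed

lemma degree_monom_minus_const:
  fixes \<sigma> :: "'a::field"
  assumes "m \<ge> 1"
  shows "degree (monom 1 m - [:\<sigma>:]) = m"
proof -
  have "degree [:-\<sigma>:] < degree (monom 1 m :: 'a poly)"
    using assms by (simp add: degree_monom_eq)
  then have "degree (monom 1 m + [:-\<sigma>:]) = m" by (simp add: degree_add_eq_left degree_monom_eq)
  then show ?thesis by (simp only: diff_conv_add_uminus minus_pCons minus_zero)
qed

lemma lead_coeff_monom_minus_const:
  "m \<ge> 1 \<Longrightarrow> lead_coeff (monom 1 m - [:\<sigma>:]) = (1 :: 'a::field)"
  by (simp add: degree_monom_minus_const coeff_pCons split: nat.split)

lemma coeff_dot_x_binomial:
  assumes "m \<ge> 1" "f = monom 1 m - [:\<sigma>:]" "\<sigma> * \<sigma> = 1"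
    and "p \<in> A_elems f" "r \<in> A_elems f"
  shows "coeff_dot m (pCons 0 p mod f) (pCons 0 r mod f) = coeff_dot m p r"
proof -
  have deg: "degree f = m" and lc: "lead_coeff f = 1"
    using assms(1,2) degree_monom_minus_const lead_coeff_monom_minus_const by blast+
  have coeff_f: "coeff f j = (if j = 0 then -\<sigma> else 0)" if "j < m" for j
    using assms(2) that by (auto simp: coeff_monom coeff_pCons split: nat.split)
  obtain n where n: "m = Suc n" using assms(1) by (cases m) auto
  have "coeff_dot m (pCons 0 p mod f) (pCons 0 r mod f) =
     (\<Sum>j<Suc n. (if j = 0 then \<sigma> * coeff p n else coeff p (j - 1)) *
                 (if j = 0 then \<sigma> * coeff r n else coeff r (j - 1)))"
    unfolding coeff_dot_def n
    by (intro sum.cong refl)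
      (simp add: coeff_pCons_0_mod_monic[OF lc deg assms(1)] assms(4,5) coeff_f n)
  also have "\<dots> = \<sigma> * \<sigma> * (coeff p n * coeff r n) + (\<Sum>j<n. coeff p j * coeff r j)"
    by (subst sum.lessThan_Suc_shift) (simp add: algebra_simps del: sum.lessThan_Suc)
  also have "\<dots> = coeff_dot m p r" using assms(3) by (simp add: coeff_dot_def n)
  finally show ?thesis .
qed

lemma mult_adjoint_x_binomial:
  assumes "m \<ge> 1" "f = monom 1 m - [:\<sigma>:]" "\<sigma> * \<sigma> = 1"
  shows "mult_adjoint f [:0, 1:] (smult \<sigma> (monom 1 (m - 1)))"
  unfolding mult_adjoint_def
proof (intro ballI)
  fix p q assume p: "p \<in> A_elems f" and q: "q \<in> A_elems f"
  let ?s = "smult \<sigma> (monom 1 (m - 1))"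
  have deg: "degree f = m" using assms(1,2) degree_monom_minus_const by blast
  then have "f \<noteq> 0" using assms(1) by auto
  have "pCons 0 (?s * q) = smult \<sigma> (monom 1 m) * q"
    using assms(1) by (cases m) (auto simp: monom_Suc)
  also have "\<dots> = smult \<sigma> (f + [:\<sigma>:]) * q" using assms(2) by simp
  also have "\<dots> = q + f * smult \<sigma> q"
    using assms(3) by (simp add: algebra_simps smult_add_right)
  finally have "pCons 0 (?s * q mod f) mod f = q"
    using q by (metis pCons_0_mod_mod mod_mult_self1 mult.commute mod_A_elems)
  then have "coeff_dot m ([:0, 1:] * p mod f) q
      = coeff_dot m (pCons 0 p mod f) (pCons 0 (?s * q mod f) mod f)" by simp
  also have "\<dots> = coeff_dot m p (?s * q mod f)"
    using coeff_dot_x_binomial[OF assms p] mod_in_A_elems[OF \<open>f \<noteq> 0\<close>] by blast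
  finally show "coeff_dot (degree f) ([:0, 1:] * p mod f) q = coeff_dot (degree f) p (?s * q mod f)"
    by (simp add: deg)
qed

lemma A_code_F_dual_if_self_adjoint_or_binomial:
  fixes f :: "'a::field poly"
  assumes "lead_coeff f = 1" "degree f = m"
    and "m = 1 \<or> (m = 2 \<and> (\<exists>a. f = [:-1, a, 1:])) \<or>
      (m \<ge> 2 \<and> (f = monom 1 m + 1 \<or> f = monom 1 m - 1))"
    and "A_code f l C"
  shows "A_code f l (F_dual f l C)"
proof -
  have "f \<noteq> 0" using assms(1) by auto
  obtain s where "mult_adjoint f [:0, 1:] s"
    using assms(3)
  proof (elim disjE conjE exE)
    assume "m = 1"
    then show thesis using that mult_adjoint_x_self assms(1,2) by blast
  next
    fix a assume "m = 2" "f = [:-1, a, 1:]"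
    then show thesis using that mult_adjoint_x_self assms(1,2) by force
  next
    assume "m \<ge> 2" "f = monom 1 m + 1"
    then have "f = monom 1 m - [:-1:]" by (simp add: one_pCons)
    then show thesis using that mult_adjoint_x_binomial[of m f "-1"] \<open>m \<ge> 2\<close> by simp
  next
    assume "m \<ge> 2" "f = monom 1 m - 1"
    then have "f = monom 1 m - [:1:]" by (simp add: one_pCons)
    then show thesis using that mult_adjoint_x_binomial[of m f 1] \<open>m \<ge> 2\<close> by simp
  qed
  then show ?thesis
    using A_code_F_dual_if_mult_adjoint[OF \<open>f \<noteq> 0\<close> _ assms(4)]
      mult_adjoint_pcompose[OF \<open>f \<noteq> 0\<close>] by blast
qed

definition x_graph_code :: "'a::field poly \<Rightarrow> (nat \<Rightarrow> 'a poly) set" where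
  "x_graph_code f = {v. v 0 \<in> A_elems f \<and> v 1 = pCons 0 (v 0) mod f \<and> (\<forall>k\<ge>2. v k = 0)}"

lemma A_code_x_graph_code:
  assumes "f \<noteq> 0"
  shows "A_code f 2 (x_graph_code f)"
  unfolding A_code_def
proof (intro conjI ballI)
  show "x_graph_code f \<subseteq> A_vecs f 2"
    using mod_in_A_elems[OF assms] by (auto simp: x_graph_code_def A_vecs_def less_2_cases_iff)
  show "(\<lambda>i. 0) \<in> x_graph_code f" by (simp add: x_graph_code_def A_elems_def)
next
  fix u v assume "u \<in> x_graph_code f" "v \<in> x_graph_code f"
  moreover have "pCons 0 (u 0 + v 0) mod f = pCons 0 (u 0) mod f + pCons 0 (v 0) mod f"
    by (simp flip: poly_mod_add_left)
  ultimately show "(\<lambda>i. u i + v i) \<in> x_graph_code f"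
    by (auto simp: x_graph_code_def A_elems_add poly_mod_add_left)
next
  fix a v assume "a \<in> A_elems f" "v \<in> x_graph_code f"
  moreover have "a * (pCons 0 (v 0) mod f) mod f = pCons 0 (a * v 0 mod f) mod f"
    by (simp add: mod_mult_right_eq pCons_0_mod_mod)
  ultimately show "A_smult f a v \<in> x_graph_code f"
    using mod_in_A_elems[OF assms] by (auto simp: x_graph_code_def A_smult_def)
qed

text \<open>The column of the transposed companion matrix of f at index i.\<close>

definition x_transpose_monom :: "'a::field poly \<Rightarrow> nat \<Rightarrow> 'a poly" where
  "x_transpose_monom f i =
     (if i = 0 then 0 else monom 1 (i - 1)) - smult (coeff f i) (monom 1 (degree f - 1))"

lemma coeff_x_transpose_monom:
  "coeff (x_transpose_monom f i) k =
     (if i \<noteq> 0 \<and> k = i - 1 then 1 else 0) - (if k = degree f - 1 then coeff f i else 0)"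
  by (simp add: x_transpose_monom_def coeff_monom)

lemma x_transpose_monom_in_A_elems: "i < degree f \<Longrightarrow> x_transpose_monom f i \<in> A_elems f"
  by (subst A_elems_iff_coeff[OF refl]) (auto simp: coeff_x_transpose_monom)

lemma coeff_dot_x_transpose_monom:
  assumes "lead_coeff f = 1" "i < degree f" "c \<in> A_elems f"
  shows "coeff_dot (degree f) (x_transpose_monom f i) c = coeff (pCons 0 c mod f) i"
  using assms
  by (simp add: x_transpose_monom_def coeff_dot_diff_left coeff_dot_smult_left coeff_dot_monom_left
      coeff_pCons_0_mod_monic)

lemma coeff_x_mult_x_transpose_monom:
  assumes "lead_coeff f = 1" "i < degree f" "k < degree f"
  shows "coeff (pCons 0 (x_transpose_monom f i) mod f) k =
    (if i \<noteq> 0 \<and> k = i then 1 else 0) + coeff f i * coeff f k"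
  using assms
  by (auto simp: coeff_pCons_0_mod_monic x_transpose_monom_in_A_elems coeff_x_transpose_monom)

lemma x_mult_normal_if_F_dual_x_graph_code:
  assumes "lead_coeff f = 1" "i < degree f" "j < degree f"
    and dual_code: "A_code f 2 (F_dual f 2 (x_graph_code f))"
  shows "coeff (pCons 0 (x_transpose_monom f i) mod f) j =
    coeff_dot (degree f) (pCons 0 (monom 1 i) mod f) (pCons 0 (monom 1 j) mod f)"
proof -
  let ?m = "degree f"
  have F_dot_2: "F_dot f 2 v w = coeff_dot ?m (v 0) (w 0) + coeff_dot ?m (v 1) (w 1)" for v w
    by (simp add: F_dot_eq_sum_coeff_dot numeral_2_eq_2)
  define v where "v = (\<lambda>k::nat. if k = 0 then - x_transpose_monom f i
    else if k = 1 then monom 1 i else 0)"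
  define w where "w = (\<lambda>k::nat. if k = 0 then monom 1 j
    else if k = 1 then pCons 0 (monom 1 j) mod f else 0)"
  have "v \<in> F_dual f 2 (x_graph_code f)"
  proof -
    have "v \<in> A_vecs f 2"
      using x_transpose_monom_in_A_elems[OF assms(2)] monom_in_A_elems[OF assms(2)]
      by (auto simp: v_def A_vecs_def less_2_cases_iff A_elems_def)
    moreover have "F_dot f 2 v u = 0" if "u \<in> x_graph_code f" for u
      using that assms(1,2)
      by (simp add: F_dot_2 v_def x_graph_code_def coeff_dot_minus_left
          coeff_dot_x_transpose_monom coeff_dot_monom_left)
    ultimately show ?thesis by (simp add: F_dual_def)
  qed
  moreover have "[:0, 1:] mod f \<in> A_elems f"
    using assms(1) mod_in_A_elems[of f] by (metis leading_coeff_0_iff zero_neq_one)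
  ultimately have "A_smult f ([:0, 1:] mod f) v \<in> F_dual f 2 (x_graph_code f)"
    using dual_code by (auto simp: A_code_def)
  moreover have "w \<in> x_graph_code f"
    using monom_in_A_elems[OF assms(3)] by (simp add: w_def x_graph_code_def)
  ultimately have "F_dot f 2 (A_smult f ([:0, 1:] mod f) v) w = 0" by (simp add: F_dual_def)
  moreover have "A_smult f ([:0, 1:] mod f) v 0 = - (pCons 0 (x_transpose_monom f i) mod f)"
    "A_smult f ([:0, 1:] mod f) v 1 = pCons 0 (monom 1 i) mod f"
    using minus_pCons[of 0 "x_transpose_monom f i", symmetric]
    by (simp_all add: A_smult_def v_def mod_mult_left_eq del: minus_pCons)
  ultimately show ?thesis
    using assms(3) by (simp add: F_dot_2 w_def coeff_dot_minus_left coeff_dot_monom_right)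
qed

lemma coeff_conditions_if_x_mult_normal:
  fixes f :: "'a::field poly"
  assumes "lead_coeff f = 1" "degree f = m" "m \<ge> 2"
    and normal: "\<And>i j. i < m \<Longrightarrow> j < m \<Longrightarrow>
      coeff (pCons 0 (x_transpose_monom f i) mod f) j =
      coeff_dot m (pCons 0 (monom 1 i) mod f) (pCons 0 (monom 1 j) mod f)"
  shows "coeff f 0 * coeff f 0 = 1"
    and "\<And>i. 0 < i \<Longrightarrow> Suc i < m \<Longrightarrow> coeff f i = 0"
    and "coeff f 0 * coeff f (m - 1) = - coeff f 1"
proof -
  have x_monom: "pCons 0 (monom 1 k) mod f = monom 1 (Suc k)" if "Suc k < m" for k
    using pCons_0_monom_mod that assms(2) by blast
  note lhs = coeff_x_mult_x_transpose_monom[OF assms(1), unfolded assms(2)]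
  show "coeff f 0 * coeff f 0 = 1"
    using normal[of 0 0] x_monom[of 0] assms(3) by (simp add: lhs coeff_dot_monom_left)
  show "coeff f i = 0" if "0 < i" "Suc i < m" for i
  proof -
    have "1 + coeff f i * coeff f i = 1"
      using normal[of i i] that by (simp add: lhs x_monom coeff_dot_monom_left)
    then show ?thesis by simp
  qed
  have "monom 1 (m - 1) \<in> A_elems f" using assms(2,3) by (simp add: monom_in_A_elems)
  then show "coeff f 0 * coeff f (m - 1) = - coeff f 1"
    using normal[of 0 "m - 1"] x_monom[of 0] assms
    by (simp add: lhs coeff_dot_monom_left coeff_pCons_0_mod_monic)
qed

lemma monic_quadratic_eq_if_coeff_conditions:
  fixes f :: "'a::field poly"
  assumes "lead_coeff f = 1" "degree f = 2"
    and "coeff f 0 * coeff f 0 = 1" "coeff f 0 * coeff f 1 = - coeff f 1"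
  shows "(\<exists>a. f = [:-1, a, 1:]) \<or> f = monom 1 2 + 1"
proof -
  have f: "f = [:coeff f 0, coeff f 1, 1:]"
    using assms(1,2) coeff_eq_0[of f]
    by (intro poly_eqI) (auto simp: coeff_pCons numeral_2_eq_2 split: nat.split)
  consider "coeff f 0 = -1" | "coeff f 0 = 1" using assms(3) square_eq_1_iff by blast
  then show ?thesis
  proof cases
    case 1
    then show ?thesis using f by metis
  next
    case 2
    text \<open>In characteristic 2 the previous case already applies, otherwise f_1 = 0.\<close>
    show ?thesis
    proof (cases "(1::'a) + 1 = 0")
      case True
      then have "coeff f 0 = -1" using 2 by (simp add: eq_neg_iff_add_eq_0)
      then show ?thesis using f by metis
    next
      case False
      have "coeff f 1 * (1 + 1) = 0" using assms(4) 2 by (simp add: algebra_simps eq_neg_iff_add_eq_0)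
      then have "coeff f 1 = 0" using False by simp
      then show ?thesis using f 2
        by (auto intro!: poly_eqI simp: coeff_pCons coeff_monom numeral_2_eq_2 split: nat.split)
    qed
  qed
qed

lemma monic_eq_monom_plus_const:
  fixes f :: "'a::field poly"
  assumes "lead_coeff f = 1" "degree f = m" "m \<ge> 1"
    and "\<And>k. 0 < k \<Longrightarrow> k < m \<Longrightarrow> coeff f k = 0"
  shows "f = monom 1 m + [:coeff f 0:]"
proof (rule poly_eqI)
  fix k
  show "coeff f k = coeff (monom 1 m + [:coeff f 0:]) k"
    using assms coeff_eq_0[of f k]
    by (cases "k = 0"; cases "k < m"; cases "k = m") (auto simp: coeff_monom coeff_pCons split: nat.split)
qed

lemma monic_special_if_x_mult_normal:
  fixes f :: "'a::field poly"
  assumes "lead_coeff f = 1" "degree f = m" "m \<ge> 2"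
    and normal: "\<And>i j. i < m \<Longrightarrow> j < m \<Longrightarrow>
      coeff (pCons 0 (x_transpose_monom f i) mod f) j =
      coeff_dot m (pCons 0 (monom 1 i) mod f) (pCons 0 (monom 1 j) mod f)"
  shows "(m = 2 \<and> (\<exists>a. f = [:-1, a, 1:])) \<or> f = monom 1 m + 1 \<or> f = monom 1 m - 1"
proof -
  note conds = coeff_conditions_if_x_mult_normal[OF assms]
  show ?thesis
  proof (cases "m = 2")
    case True
    then show ?thesis
      using monic_quadratic_eq_if_coeff_conditions[OF assms(1)] conds(1,3) assms(2) by auto
  next
    case False
    then have "coeff f 1 = 0" using conds(2)[of 1] assms(3) by simp
    then have "coeff f (m - 1) = 0" using conds(1,3) by auto
    then have "coeff f k = 0" if "0 < k" "k < m" for k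
      using conds(2)[of k] that by (cases "k = m - 1") auto
    then have "f = monom 1 m + [:coeff f 0:]"
      using monic_eq_monom_plus_const assms(1,2,3) by (metis one_le_numeral order.trans)
    moreover have "coeff f 0 = 1 \<or> coeff f 0 = -1" using conds(1) square_eq_1_iff by blast
    ultimately show ?thesis by (auto simp: one_pCons)
  qed
qed

theorem mainTheorem13:
  fixes f :: "'a::{finite,field} poly" and m :: nat
  assumes "lead_coeff f = 1" and "degree f = m" and "m \<ge> 1"
  shows "(\<forall>l C. A_code f l C \<longrightarrow> A_code f l (F_dual f l C)) \<longleftrightarrow>
    (m = 1 \<or> (m = 2 \<and> (\<exists>a. f = [:-1, a, 1:])) \<or>
     (m \<ge> 2 \<and> (f = monom 1 m + 1 \<or> f = monom 1 m - 1)))"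
    (is "?dual_codes \<longleftrightarrow> ?special")
proof
  assume dual_codes: ?dual_codes
  show ?special
  proof (cases "m = 1")
    case False
    then have "m \<ge> 2" using assms(3) by simp
    have "f \<noteq> 0" using assms(1) by auto
    then have "A_code f 2 (F_dual f 2 (x_graph_code f))"
      using dual_codes A_code_x_graph_code by blast
    then show ?thesis
      using monic_special_if_x_mult_normal[OF assms(1,2) \<open>m \<ge> 2\<close>]
        x_mult_normal_if_F_dual_x_graph_code[OF assms(1)] assms(2) \<open>m \<ge> 2\<close> by blast
  qed simp
qed (use A_code_F_dual_if_self_adjoint_or_binomial[OF assms(1,2)] in blast)

end
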